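(* Let $u\geqslant1$ and $b\geqslant 8u+24$ be integers. There exists a set $\mathfrak{A}$ of $u$ integer $3\times3$ matrices such that the multiset of absolute values of all entries of all matrices in $\mathfrak{A}$ is exactly the set $$[9,2u+7]_2\cup[10,4u+6]_4\cup[2u+17,6u+15]_2\cup[6u+25,8u+23]_2\cup[b,b+u-1]\cup[b+u+8,b+2u+7]\cup[b+5u+16,b+6u+15]\cup[b+8u+32,b+9u+31]$$ (each element occurring once), and $\sigma_r(A)=\sigma_c(A)=(0,0,0)$ for every $A\in\mathfrak{A}$.
   Context: For integers $a\equiv b\pmod d$ with $d\geqslant1$, $[a,b]_d=\{a+id: 0\leqslant i\leqslant (b-a)/d\}$ if $a\leqslant b$ and $[a,b]_d=\varnothing$ if $a>b$; $[a,b]=[a,b]_1$. For a matrix $A$, $\sigma_r(A)$ is the sequence of its row sums and $\sigma_c(A)$ the sequence of its column sums. *)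

theory Defs
  imports "HOL-Analysis.Analysis" "HOL-Library.Multiset"
begin

definition ivl_step :: "int \<Rightarrow> int \<Rightarrow> int \<Rightarrow> int set" where
  "ivl_step a b d = (if a \<le> b then {a + i * d | i. 0 \<le> i \<and> i \<le> (b - a) div d} else {})"

definition ivl :: "int \<Rightarrow> int \<Rightarrow> int set" where
  "ivl a b = ivl_step a b 1"

definition abs_entries :: "int^3^3 \<Rightarrow> int multiset" where
  "abs_entries A = (\<Sum>i\<in>UNIV. \<Sum>j\<in>UNIV. {#\<bar>A $ i $ j\<bar>#})"

definition row_sums_zero :: "int^3^3 \<Rightarrow> bool" where
  "row_sums_zero A \<longleftrightarrow> (\<forall>i. (\<Sum>j\<in>UNIV. A $ i $ j) = 0)"

definition col_sums_zero :: "int^3^3 \<Rightarrow> bool" where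
  "col_sums_zero A \<longleftrightarrow> (\<forall>j. (\<Sum>i\<in>UNIV. A $ i $ j) = 0)"

end

theory Submission
  imports Defs
begin

text \<open>For \<open>m = 0, \<dots>, u - 1\<close> take the matrix whose top left \<open>2 \<times> 2\<close> block is
  \<open>[[b + m, -(b + 2u + 7 - m)], [-(b + 6u + 15 - m), b + 8u + 32 + m]]\<close>, completed by the
  unique third row and column making all line sums vanish. The five completing entries have
  absolute values \<open>2u + 7 - 2m\<close>, \<open>2u + 17 + 2m\<close>, \<open>6u + 15 - 2m\<close>, \<open>6u + 25 + 2m\<close> and \<open>10 + 4m\<close>.
  As \<open>m\<close> varies, each of the nine entry positions runs through one arithmetic progression,
  and these nine progressions are pairwise disjoint, being separated either by size (this uses
  \<open>b \<ge> 8u + 24\<close>) or by parity; their union is the required set.\<close>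

lemma int_le_div_iff_mult_le:
  fixes i q d :: int
  assumes "0 < d"
  shows "i \<le> q div d \<longleftrightarrow> i * d \<le> q"
proof
  assume "i \<le> q div d"
  then have "i * d \<le> q div d * d" using assms by simp
  also have "\<dots> \<le> q" using pos_mod_sign[OF assms, of q] div_mult_mod_eq[of q d] by linarith
  finally show "i * d \<le> q" .
next
  assume "i * d \<le> q"
  then show "i \<le> q div d" using zdiv_mono1[OF _ assms] assms by fastforce
qed

lemma mem_ivl_step:
  fixes a e d x :: int
  assumes "0 < d"
  shows "x \<in> ivl_step a e d \<longleftrightarrow> a \<le> x \<and> x \<le> e \<and> d dvd x - a"
proof
  assume "x \<in> ivl_step a e d"
  then obtain i where "x = a + i * d" "0 \<le> i" "i * d \<le> e - a"
    unfolding ivl_step_def using int_le_div_iff_mult_le[OF assms] by (auto split: if_splits)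
  then show "a \<le> x \<and> x \<le> e \<and> d dvd x - a" using assms by simp
next
  assume x: "a \<le> x \<and> x \<le> e \<and> d dvd x - a"
  then obtain i where i: "x = a + i * d" by (metis dvdE add.commute diff_add_cancel mult.commute)
  with x assms have "0 \<le> i" "i * d \<le> e - a" by (simp_all add: zero_le_mult_iff)
  with i x show "x \<in> ivl_step a e d"
    unfolding ivl_step_def using int_le_div_iff_mult_le[OF assms] by auto
qed

lemma finite_ivl_step: "finite (ivl_step a e d)"
proof -
  have "ivl_step a e d \<subseteq> (\<lambda>i. a + i * d) ` {0..(e - a) div d}"
    unfolding ivl_step_def by auto
  then show ?thesis using finite_subset by blast
qed

lemma ivl_step_split:
  fixes a c e d :: int
  assumes "0 < d" "a \<le> c + d" "c \<le> e" "d dvd c - a"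
  shows "ivl_step a e d = ivl_step a c d \<union> ivl_step (c + d) e d"
proof -
  have shift: "d dvd x - (c + d) \<longleftrightarrow> d dvd x - a" for x
  proof -
    have "x - a = (x - (c + d)) + ((c - a) + d)" by simp
    then show ?thesis using assms(4) by (metis dvd_add_left_iff dvd_refl)
  qed
  have gap: "c + d \<le> x" if "c < x" "d dvd x - a" for x
  proof -
    have "x - c = (x - a) - (c - a)" by simp
    then have "d dvd x - c" using that(2) assms(4) by (metis dvd_diff)
    then show ?thesis using zdvd_imp_le[of d "x - c"] that(1) by simp
  qed
  show ?thesis
  proof (intro set_eqI iffI)
    fix x assume "x \<in> ivl_step a e d"
    then show "x \<in> ivl_step a c d \<union> ivl_step (c + d) e d"
      using assms gap[of x] by (cases "x \<le> c") (auto simp: mem_ivl_step shift)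
  next
    fix x assume "x \<in> ivl_step a c d \<union> ivl_step (c + d) e d"
    then show "x \<in> ivl_step a e d" using assms by (auto simp: mem_ivl_step shift)
  qed
qed

lemma ivl_step_eq_image:
  fixes a d n :: int
  assumes "0 < d"
  shows "ivl_step a (a + (n - 1) * d) d = (\<lambda>i. a + d * i) ` {0..<n}"
proof (cases "1 \<le> n")
  case True
  then have "(a + (n - 1) * d - a) div d = n - 1" using assms by simp
  with True assms show ?thesis unfolding ivl_step_def by (auto simp: mult.commute)
next
  case False
  with assms have "a + (n - 1) * d < a" by (simp add: mult_less_0_iff)
  with False show ?thesis unfolding ivl_step_def by simp
qed

lemma reflect_atLeastLessThan:
  fixes n :: int
  shows "(\<lambda>i. n - 1 - i) ` {0..<n} = {0..<n}"
  by (auto intro!: image_eqI[where x="n - 1 - x" for x])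

lemma ivl_step_eq_image_desc:
  fixes a d n :: int
  assumes "0 < d"
  shows "ivl_step (e - (n - 1) * d) e d = (\<lambda>i. e - d * i) ` {0..<n}"
proof -
  have "ivl_step (e - (n - 1) * d) e d = (\<lambda>i. e - (n - 1) * d + d * i) ` {0..<n}"
    using ivl_step_eq_image[OF assms, of "e - (n - 1) * d" n] by simp
  also have "\<dots> = (\<lambda>i. e - (n - 1) * d + d * i) ` (\<lambda>i. n - 1 - i) ` {0..<n}"
    by (simp only: reflect_atLeastLessThan)
  also have "\<dots> = (\<lambda>i. e - d * i) ` {0..<n}"
    by (simp add: image_image algebra_simps)
  finally show ?thesis .
qed

lemma sum_singletons_eq_mset_set:
  "inj_on f A \<Longrightarrow> (\<Sum>x\<in>A. {#f x#}) = mset_set (f ` A)"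
  by (simp add: sum_unfold_sum_mset image_mset_mset_set)

lemma sum_mset_arith_prog:
  fixes a d n :: int
  assumes "0 < d" "e = a + (n - 1) * d"
  shows "(\<Sum>i\<in>{0..<n}. {#a + d * i#}) = mset_set (ivl_step a e d)"
  using assms by (simp add: ivl_step_eq_image sum_singletons_eq_mset_set inj_on_def)

lemma sum_mset_arith_prog_desc:
  fixes a d n :: int
  assumes "0 < d" "a = e - (n - 1) * d"
  shows "(\<Sum>i\<in>{0..<n}. {#e - d * i#}) = mset_set (ivl_step a e d)"
  using assms by (simp add: ivl_step_eq_image_desc sum_singletons_eq_mset_set inj_on_def)

lemma mset_set_Un_separated:
  fixes c :: "'a :: linorder"
  assumes "finite A" "finite B" "A \<subseteq> {..<c}" "B \<subseteq> {c..}"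
  shows "mset_set (A \<union> B) = mset_set A + mset_set B"
  using assms by (intro mset_set_Union) (auto simp: subset_iff, force)

text \<open>The target set with \<open>[2n+17, 6n+15]\<^sub>2\<close> split at \<open>4n+16\<close>, so that there is one block for
  each of the nine entry positions.\<close>
definition entry_blocks :: "int \<Rightarrow> int \<Rightarrow> int multiset" where
  "entry_blocks n b =
     mset_set (ivl_step 9 (2 * n + 7) 2) + mset_set (ivl_step 10 (4 * n + 6) 4)
     + mset_set (ivl_step (2 * n + 17) (4 * n + 15) 2) + mset_set (ivl_step (4 * n + 17) (6 * n + 15) 2)
     + mset_set (ivl_step (6 * n + 25) (8 * n + 23) 2)
     + mset_set (ivl b (b + n - 1)) + mset_set (ivl (b + n + 8) (b + 2 * n + 7))
     + mset_set (ivl (b + 5 * n + 16) (b + 6 * n + 15)) + mset_set (ivl (b + 8 * n + 32) (b + 9 * n + 31))"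

lemma mset_set_target_eq_entry_blocks:
  fixes n b :: int
  assumes "0 \<le> n" "8 * n + 24 \<le> b"
  shows "mset_set (ivl_step 9 (2 * n + 7) 2 \<union> ivl_step 10 (4 * n + 6) 4
        \<union> ivl_step (2 * n + 17) (6 * n + 15) 2 \<union> ivl_step (6 * n + 25) (8 * n + 23) 2
        \<union> ivl b (b + n - 1) \<union> ivl (b + n + 8) (b + 2 * n + 7)
        \<union> ivl (b + 5 * n + 16) (b + 6 * n + 15) \<union> ivl (b + 8 * n + 32) (b + 9 * n + 31))
    = entry_blocks n b"
    (is "mset_set (?S3 \<union> ?S9 \<union> ?S67 \<union> ?S8 \<union> ?L1 \<union> ?L2 \<union> ?L3 \<union> ?L4) = _")
proof -
  define S6 S7 where "S6 = ivl_step (2 * n + 17) (4 * n + 15) 2"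
    and "S7 = ivl_step (4 * n + 17) (6 * n + 15) 2"
  have S67: "?S67 = S6 \<union> S7"
  proof -
    have "2 dvd (4 * n + 15) - (2 * n + 17)" by presburger
    then show ?thesis
      unfolding S6_def S7_def using assms ivl_step_split[of 2 "2 * n + 17" "4 * n + 15" "6 * n + 15"]
      by (simp add: ac_simps)
  qed
  have fin: "finite (ivl_step a e d)" "finite (ivl a e)" for a e d :: int
    by (simp_all add: finite_ivl_step ivl_def)
  have "mset_set (?S3 \<union> ?S9) = mset_set ?S3 + mset_set ?S9"
    by (intro mset_set_Union fin) (auto simp: mem_ivl_step, presburger)
  moreover have "mset_set (?S3 \<union> ?S9 \<union> ?S67) = mset_set (?S3 \<union> ?S9) + mset_set ?S67"
    by (intro mset_set_Union fin finite_UnI) (auto simp: mem_ivl_step, presburger)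
  moreover have "mset_set ?S67 = mset_set S6 + mset_set S7"
    unfolding S67 by (intro mset_set_Un_separated[where c = "4 * n + 16"])
      (auto simp: fin S6_def S7_def mem_ivl_step)
  moreover have "mset_set (?S3 \<union> ?S9 \<union> ?S67 \<union> ?S8) =
      mset_set (?S3 \<union> ?S9 \<union> ?S67) + mset_set ?S8"
    using assms by (intro mset_set_Un_separated[where c = "6 * n + 25"])
      (auto simp: fin mem_ivl_step S67 S6_def S7_def)
  moreover have "mset_set (?S3 \<union> ?S9 \<union> ?S67 \<union> ?S8 \<union> ?L1) =
      mset_set (?S3 \<union> ?S9 \<union> ?S67 \<union> ?S8) + mset_set ?L1"
    using assms by (intro mset_set_Un_separated[where c = b]) (auto simp: fin mem_ivl_step ivl_def)
  moreover have "mset_set (?S3 \<union> ?S9 \<union> ?S67 \<union> ?S8 \<union> ?L1 \<union> ?L2) =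
      mset_set (?S3 \<union> ?S9 \<union> ?S67 \<union> ?S8 \<union> ?L1) + mset_set ?L2"
    using assms by (intro mset_set_Un_separated[where c = "b + n + 8"])
      (auto simp: fin mem_ivl_step ivl_def)
  moreover have "mset_set (?S3 \<union> ?S9 \<union> ?S67 \<union> ?S8 \<union> ?L1 \<union> ?L2 \<union> ?L3) =
      mset_set (?S3 \<union> ?S9 \<union> ?S67 \<union> ?S8 \<union> ?L1 \<union> ?L2) + mset_set ?L3"
    using assms by (intro mset_set_Un_separated[where c = "b + 5 * n + 16"])
      (auto simp: fin mem_ivl_step ivl_def)
  moreover have "mset_set (?S3 \<union> ?S9 \<union> ?S67 \<union> ?S8 \<union> ?L1 \<union> ?L2 \<union> ?L3 \<union> ?L4) =
      mset_set (?S3 \<union> ?S9 \<union> ?S67 \<union> ?S8 \<union> ?L1 \<union> ?L2 \<union> ?L3) + mset_set ?L4"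
    using assms by (intro mset_set_Un_separated[where c = "b + 8 * n + 32"])
      (auto simp: fin mem_ivl_step ivl_def)
  ultimately show ?thesis unfolding entry_blocks_def S6_def S7_def by (simp only: add.assoc)
qed

definition zero_sum_matrix :: "int \<Rightarrow> int \<Rightarrow> int \<Rightarrow> int^3^3" where
  "zero_sum_matrix n b m =
     (let B1 = b + m; B2 = b + 2 * n + 7 - m; B3 = b + 6 * n + 15 - m; B4 = b + 8 * n + 32 + m in
      vector [vector [B1, -B2, B2 - B1], vector [-B3, B4, B3 - B4], vector [B3 - B1, B2 - B4, 10 + 4 * m]])"

lemma zero_sum_matrix_line_sums:
  "row_sums_zero (zero_sum_matrix n b m) \<and> col_sums_zero (zero_sum_matrix n b m)"
  unfolding row_sums_zero_def col_sums_zero_def zero_sum_matrix_def Let_def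
  by (auto simp: sum_3 forall_3)

lemma inj_on_zero_sum_matrix: "inj_on (zero_sum_matrix n b) A"
proof (rule inj_onI)
  fix x y assume "zero_sum_matrix n b x = zero_sum_matrix n b y"
  then have "zero_sum_matrix n b x $ 1 $ 1 = zero_sum_matrix n b y $ 1 $ 1" by simp
  then show "x = y" unfolding zero_sum_matrix_def Let_def by simp
qed

lemma abs_entries_zero_sum_matrix:
  assumes "0 \<le> m" "m < n" "0 \<le> b"
  shows "abs_entries (zero_sum_matrix n b m) =
    {#2 * n + 7 - 2 * m#} + {#10 + 4 * m#} + {#2 * n + 17 + 2 * m#} + {#6 * n + 15 - 2 * m#}
    + {#6 * n + 25 + 2 * m#} + {#b + m#} + {#b + 2 * n + 7 - m#} + {#b + 6 * n + 15 - m#}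
    + {#b + 8 * n + 32 + m#}"
  using assms unfolding abs_entries_def zero_sum_matrix_def Let_def
  by (simp add: sum_3) (simp add: algebra_simps)

lemma sum_abs_entries_zero_sum_matrix:
  assumes "0 \<le> b"
  shows "(\<Sum>m\<in>{0..<n}. abs_entries (zero_sum_matrix n b m)) = entry_blocks n b"
proof -
  have "(\<Sum>m\<in>{0..<n}. abs_entries (zero_sum_matrix n b m)) =
    (\<Sum>m\<in>{0..<n}. {#2 * n + 7 - 2 * m#}) + (\<Sum>m\<in>{0..<n}. {#10 + 4 * m#})
    + (\<Sum>m\<in>{0..<n}. {#2 * n + 17 + 2 * m#}) + (\<Sum>m\<in>{0..<n}. {#6 * n + 15 - 2 * m#})
    + (\<Sum>m\<in>{0..<n}. {#6 * n + 25 + 2 * m#}) + (\<Sum>m\<in>{0..<n}. {#b + m#})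
    + (\<Sum>m\<in>{0..<n}. {#b + 2 * n + 7 - m#}) + (\<Sum>m\<in>{0..<n}. {#b + 6 * n + 15 - m#})
    + (\<Sum>m\<in>{0..<n}. {#b + 8 * n + 32 + m#})"
    using assms by (simp only: sum.distrib[symmetric])
      (rule sum.cong; simp add: abs_entries_zero_sum_matrix)
  moreover have "(\<Sum>m\<in>{0..<n}. {#2 * n + 7 - 2 * m#}) = mset_set (ivl_step 9 (2 * n + 7) 2)"
    by (rule sum_mset_arith_prog_desc) simp_all
  moreover have "(\<Sum>m\<in>{0..<n}. {#10 + 4 * m#}) = mset_set (ivl_step 10 (4 * n + 6) 4)"
    by (rule sum_mset_arith_prog) simp_all
  moreover have "(\<Sum>m\<in>{0..<n}. {#2 * n + 17 + 2 * m#}) = mset_set (ivl_step (2 * n + 17) (4 * n + 15) 2)"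
    by (rule sum_mset_arith_prog) simp_all
  moreover have "(\<Sum>m\<in>{0..<n}. {#6 * n + 15 - 2 * m#}) = mset_set (ivl_step (4 * n + 17) (6 * n + 15) 2)"
    by (rule sum_mset_arith_prog_desc) simp_all
  moreover have "(\<Sum>m\<in>{0..<n}. {#6 * n + 25 + 2 * m#}) = mset_set (ivl_step (6 * n + 25) (8 * n + 23) 2)"
    by (rule sum_mset_arith_prog) simp_all
  moreover have "(\<Sum>m\<in>{0..<n}. {#b + m#}) = mset_set (ivl b (b + n - 1))"
    using sum_mset_arith_prog[of 1 "b + n - 1" b n] by (simp add: ivl_def)
  moreover have "(\<Sum>m\<in>{0..<n}. {#b + 2 * n + 7 - m#}) = mset_set (ivl (b + n + 8) (b + 2 * n + 7))"
    using sum_mset_arith_prog_desc[of 1 "b + n + 8" "b + 2 * n + 7" n] by (simp add: ivl_def)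
  moreover have "(\<Sum>m\<in>{0..<n}. {#b + 6 * n + 15 - m#}) = mset_set (ivl (b + 5 * n + 16) (b + 6 * n + 15))"
    using sum_mset_arith_prog_desc[of 1 "b + 5 * n + 16" "b + 6 * n + 15" n] by (simp add: ivl_def)
  moreover have "(\<Sum>m\<in>{0..<n}. {#b + 8 * n + 32 + m#}) = mset_set (ivl (b + 8 * n + 32) (b + 9 * n + 31))"
    using sum_mset_arith_prog[of 1 "b + 9 * n + 31" "b + 8 * n + 32" n] by (simp add: ivl_def)
  ultimately show ?thesis unfolding entry_blocks_def by simp
qed

theorem lemma2p2:
  fixes u :: nat and b :: int
  assumes "u \<ge> 1" and "b \<ge> 8 * int u + 24"
  shows "\<exists>\<AA> :: (int^3^3) set. finite \<AA> \<and> card \<AA> = u \<and>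
    (\<Sum>A\<in>\<AA>. abs_entries A) =
      mset_set (ivl_step 9 (2 * int u + 7) 2 \<union> ivl_step 10 (4 * int u + 6) 4
        \<union> ivl_step (2 * int u + 17) (6 * int u + 15) 2 \<union> ivl_step (6 * int u + 25) (8 * int u + 23) 2
        \<union> ivl b (b + int u - 1) \<union> ivl (b + int u + 8) (b + 2 * int u + 7)
        \<union> ivl (b + 5 * int u + 16) (b + 6 * int u + 15) \<union> ivl (b + 8 * int u + 32) (b + 9 * int u + 31)) \<and>
    (\<forall>A\<in>\<AA>. row_sums_zero A \<and> col_sums_zero A)"
proof -
  let ?\<AA> = "zero_sum_matrix (int u) b ` {0..<int u}"
  have "(\<Sum>A\<in>?\<AA>. abs_entries A) = (\<Sum>m\<in>{0..<int u}. abs_entries (zero_sum_matrix (int u) b m))"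
    by (simp add: sum.reindex inj_on_zero_sum_matrix)
  also have "\<dots> = entry_blocks (int u) b"
    using assms(2) by (intro sum_abs_entries_zero_sum_matrix) simp
  finally show ?thesis
    using assms(2) mset_set_target_eq_entry_blocks[of "int u" b] zero_sum_matrix_line_sums
    by (intro exI[of _ ?\<AA>]) (auto simp: card_image inj_on_zero_sum_matrix)
qed

end
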